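(* For every positive integer $n$, the $n$th Catalan number $C_n=\frac{1}{n+1}\binom{2n}{n}$ equals the determinant $$C_n=\det\left(\binom{i+1}{j-i+1}\right)_{i,j=0}^{n-1},$$ i.e. the determinant of the $n\times n$ Hessenberg matrix whose row $i$ ($0\le i\le n-1$) contains the entries $\binom{i+1}{0},\binom{i+1}{1},\dots$ starting in column $i-1$ (so row $0$ is $(\binom{1}{1},0,\dots,0)$, row $1$ is $(\binom{2}{0},\binom{2}{1},\binom{2}{2},0,\dots)$, row $2$ is $(0,\binom{3}{0},\binom{3}{1},\binom{3}{2},\binom{3}{3},0,\dots)$, and the last row is $(0,\dots,0,\binom{n}{0},\binom{n}{1})$), all entries outside the matrix being truncated.
   Context: Convention: $\binom{a}{b}=0$ if $b<0$ or $b>a$ (for nonnegative integer $a$). Rows and columns are indexed from $0$ to $n-1$. *)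

theory Defs
  imports "Jordan_Normal_Form.Determinant"
begin

definition binom :: "nat \<Rightarrow> int \<Rightarrow> int" where
  "binom a b = (if b < 0 then 0 else int (a choose nat b))"

definition catalan_hessenberg :: "nat \<Rightarrow> int mat" where
  "catalan_hessenberg n = mat n n (\<lambda>(i, j). binom (i + 1) (int j - int i + 1))"

end

theory Submission imports Defs begin

text \<open>Write H(n) for catalan_hessenberg n. Expanding det H(n+1) along its last column, deleting
  row i leaves a block upper triangular matrix whose diagonal blocks are H(i) and a unitriangular
  matrix, so det H(n+1) = \<Sum>i\<le>n. (-1)^(n-i) C(i+1, n+1-i) det H(i).
  The Catalan numbers satisfy the same recurrence: the summands
  t(k) = (-1)^(n-k) C(k+1, n-k) Cat(k) form a hypergeometric sequence whose partial sums
  telescope in Gosper's sense, \<Sum>j\<le>k. t(j) = 2(n-k)(2k+1) / (n(n+1)) t(k), and the sum up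
  to k = n is therefore 0.\<close>

lemma det_binom_unitriangular:
  "det (mat r r (\<lambda>(a, b). binom (a + c) (int b - int a))) = 1"
proof -
  let ?U = "mat r r (\<lambda>(a, b). binom (a + c) (int b - int a))"
  have "upper_triangular ?U"
    unfolding upper_triangular_def binom_def by auto
  then have "det ?U = prod_list (diag_mat ?U)"
    by (rule det_upper_triangular[of _ r]) simp
  also have "\<dots> = 1"
    unfolding prod_list_diag_prod by (rule prod.neutral) (simp add: binom_def)
  finally show ?thesis .
qed

lemma mat_delete_catalan_hessenberg_last_col:
  assumes "i \<le> n"
  shows "mat_delete (catalan_hessenberg (Suc n)) i n =
    four_block_mat (catalan_hessenberg i)
      (mat i (n - i) (\<lambda>(a, b). catalan_hessenberg (Suc n) $$ (a, b + i)))
      (0\<^sub>m (n - i) i)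
      (mat (n - i) (n - i) (\<lambda>(a, b). binom (a + (i + 2)) (int b - int a)))"
  (is "?L = ?R")
proof (rule eq_matI)
  show "dim_row ?L = dim_row ?R" "dim_col ?L = dim_col ?R"
    using assms by (simp_all add: catalan_hessenberg_def mat_delete_def)
  fix a b assume "a < dim_row ?R" "b < dim_col ?R"
  then have "a < n" "b < n"
    using assms by (auto simp: catalan_hessenberg_def)
  then show "?L $$ (a, b) = ?R $$ (a, b)"
    using assms by (auto simp: mat_delete_def catalan_hessenberg_def binom_def)
qed

lemma det_mat_delete_catalan_hessenberg_last_col:
  assumes "i \<le> n"
  shows "det (mat_delete (catalan_hessenberg (Suc n)) i n) = det (catalan_hessenberg i)"
proof -
  have H: "catalan_hessenberg i \<in> carrier_mat i i"
    by (simp add: catalan_hessenberg_def)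
  show ?thesis
    unfolding mat_delete_catalan_hessenberg_last_col[OF assms]
      det_four_block_mat_lower_left_zero[OF H mat_carrier refl mat_carrier] det_binom_unitriangular
    by simp
qed

lemma det_catalan_hessenberg_Suc:
  "det (catalan_hessenberg (Suc n)) =
     (\<Sum>i\<le>n. (-1) ^ (n - i) * int ((i + 1) choose (Suc n - i)) * det (catalan_hessenberg i))"
proof -
  have "catalan_hessenberg (Suc n) \<in> carrier_mat (Suc n) (Suc n)"
    by (simp add: catalan_hessenberg_def)
  then have "det (catalan_hessenberg (Suc n)) =
      (\<Sum>i<Suc n. catalan_hessenberg (Suc n) $$ (i, n) * cofactor (catalan_hessenberg (Suc n)) i n)"
    by (rule laplace_expansion_column) simp
  also have "\<dots> = (\<Sum>i\<le>n. (-1) ^ (n - i) * int ((i + 1) choose (Suc n - i)) * det (catalan_hessenberg i))"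
  proof (rule sum.cong)
    fix i assume "i \<in> {..n}"
    then have i: "i \<le> n" by simp
    then have "(-1 :: int) ^ (i + n) = (-1) ^ (n - i)"
      by (metis add.commute le_add_diff_inverse2 neg_one_even_power neg_one_power_add_eq_neg_one_power_diff)
    moreover have "nat (int n - int i + 1) = Suc n - i"
      using i by simp
    moreover have "catalan_hessenberg (Suc n) $$ (i, n) = binom (i + 1) (int n - int i + 1)"
      using i by (simp add: catalan_hessenberg_def)
    ultimately show "catalan_hessenberg (Suc n) $$ (i, n) * cofactor (catalan_hessenberg (Suc n)) i n =
        (-1) ^ (n - i) * int ((i + 1) choose (Suc n - i)) * det (catalan_hessenberg i)"
      using i by (simp add: cofactor_def det_mat_delete_catalan_hessenberg_last_col binom_def)
  qed (simp add: lessThan_Suc_atMost)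
  finally show ?thesis .
qed

lemma Suc_diff_times_binomial_minus1:
  assumes "0 < m"
  shows "(Suc N - m) * (N choose (m - 1)) = m * (N choose m)"
  using assms binomial_absorb_comp binomial_absorption gr0_conv_Suc by auto

lemma binomial_Suc_minus1_ratio:
  assumes "0 < m"
  shows "(real N + 2 - m) * (real N + 1 - m) * (Suc N choose (m - 1)) = (N + 1) * m * (N choose m)"
proof (cases "m \<le> Suc N")
  case True
  have "(Suc N - (m - 1)) * (Suc N choose (m - 1)) = Suc N * (N choose (m - 1))"
    using binomial_absorb_comp[of "Suc N" "m - 1"] by simp
  with Suc_diff_times_binomial_minus1[OF assms, of N]
  have "(Suc N - (m - 1)) * (Suc N - m) * (Suc N choose (m - 1)) = Suc N * m * (N choose m)"
    by (metis mult.assoc mult.left_commute)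
  then have "real ((Suc N - (m - 1)) * (Suc N - m) * (Suc N choose (m - 1))) = real (Suc N * m * (N choose m))"
    by (rule arg_cong)
  then show ?thesis
    using True assms by (simp add: of_nat_diff add_ac)
next
  case False
  then have "N choose m = 0"
    by simp
  from False consider "m = N + 2" | "Suc N < m - 1"
    by linarith
  then show ?thesis
    by cases (simp_all add: \<open>N choose m = 0\<close> binomial_eq_0)
qed

lemma Suc_times_central_binomial_Suc:
  "Suc k * ((2 * Suc k) choose Suc k) = 2 * (2 * k + 1) * ((2 * k) choose k)"
  by (metis Suc_eq_plus1 Suc_times_binomial Suc_times_binomial_add add_Suc add_Suc_right mult.assoc mult_2)

definition catalan :: "nat \<Rightarrow> real" where
  "catalan n = real ((2 * n) choose n) / real (n + 1)"

lemma catalan_Suc: "catalan (Suc k) = 2 * (2 * k + 1) / (k + 2) * catalan k"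
proof -
  define C where "C = real ((2 * k) choose k)"
  define C' where "C' = real ((2 * Suc k) choose Suc k)"
  have "real (Suc k) * C' = 2 * (2 * k + 1) * C"
    unfolding C_def C'_def using arg_cong[OF Suc_times_central_binomial_Suc[of k], of real]
    by (simp only: of_nat_mult of_nat_add of_nat_numeral of_nat_1)
  then have "C' = 2 * (2 * k + 1) * C / (k + 1)"
    by (simp add: field_simps)
  then show ?thesis
    unfolding catalan_def C_def[symmetric] C'_def[symmetric] by (simp add: add_ac)
qed

definition catalan_term :: "nat \<Rightarrow> nat \<Rightarrow> real" where
  "catalan_term n k = (-1) ^ (n - k) * real ((k + 1) choose (n - k)) * catalan k"

lemma catalan_term_Suc:
  assumes "k < n"
  shows "(2 * real k + 2 - n) * (2 * real k + 3 - n) * catalan_term n (Suc k)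
       = - 2 * (real n - k) * (2 * k + 1) * catalan_term n k"
proof -
  define m where "m = n - k"
  have m: "0 < m" "n - Suc k = m - 1" "real n = real k + m"
    using assms unfolding m_def by auto
  have sign: "(-1 :: real) ^ (m - 1) = - ((-1) ^ m)"
    using \<open>0 < m\<close> by (cases m) auto
  have "(2 * real k + 2 - n) * (2 * real k + 3 - n) * catalan_term n (Suc k)
      = - ((-1) ^ m) * ((real (Suc k) + 2 - m) * (real (Suc k) + 1 - m) * (Suc (Suc k) choose (m - 1)))
          * catalan (Suc k)"
    unfolding catalan_term_def m sign by (simp add: algebra_simps del: binomial_Suc_Suc)
  also have "\<dots> = - 2 * (real n - k) * (2 * k + 1) * catalan_term n k"
    unfolding binomial_Suc_minus1_ratio[OF \<open>0 < m\<close>] catalan_Suc catalan_term_def m_def[symmetric]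
    using m by (simp add: field_simps)
  finally show ?thesis .
qed

lemma sum_catalan_term_atMost:
  assumes "1 \<le> n" "k \<le> n"
  shows "(\<Sum>j\<le>k. catalan_term n j) = 2 * (real n - k) * (2 * k + 1) / (n * (n + 1)) * catalan_term n k"
  using assms(2)
proof (induction k)
  case 0
  show ?case
  proof (cases "n = 1")
    case False
    with assms(1) have "catalan_term n 0 = 0"
      by (simp add: catalan_term_def)
    then show ?thesis
      by simp
  qed (simp add: catalan_term_def catalan_def)
next
  case (Suc k)
  then have "k < n"
    by simp
  have "(\<Sum>j\<le>Suc k. catalan_term n j)
      = 2 * (real n - k) * (2 * k + 1) / (n * (n + 1)) * catalan_term n k + catalan_term n (Suc k)"
    using Suc by simp
  also have "\<dots> = - (2 * real k + 2 - n) * (2 * real k + 3 - n) / (n * (n + 1)) * catalan_term n (Suc k)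
      + catalan_term n (Suc k)"
    using catalan_term_Suc[OF \<open>k < n\<close>] by (simp add: field_simps)
  also have "\<dots> = (- (2 * real k + 2 - n) * (2 * real k + 3 - n) + n * (n + 1)) / (n * (n + 1))
      * catalan_term n (Suc k)"
  proof -
    have add_frac: "x / d * t + t = (x + d) / d * t" if "d \<noteq> 0" for x d t :: real
      using that by (simp add: field_simps)
    show ?thesis
      by (rule add_frac) (use assms(1) in \<open>simp only: of_nat_mult mult_eq_0_iff, simp\<close>)
  qed
  also have "- (2 * real k + 2 - n) * (2 * real k + 3 - n) + n * (n + 1) = 2 * (real n - Suc k) * (2 * Suc k + 1)"
    by (simp add: algebra_simps)
  finally show ?case .
qed

lemma catalan_Suc_alternating_recurrence:
  "catalan (Suc n) = (\<Sum>k\<le>n. (-1) ^ (n - k) * real ((k + 1) choose (Suc n - k)) * catalan k)"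
proof -
  have "(\<Sum>k\<le>Suc n. catalan_term (Suc n) k) = 0"
    using sum_catalan_term_atMost[of "Suc n" "Suc n"] by simp
  moreover have "catalan_term (Suc n) k = - ((-1) ^ (n - k) * real ((k + 1) choose (Suc n - k)) * catalan k)"
    if "k \<le> n" for k
    using that by (simp add: catalan_term_def Suc_diff_le)
  ultimately show ?thesis
    by (simp add: catalan_term_def sum_negf)
qed

lemma det_catalan_hessenberg: "real_of_int (det (catalan_hessenberg n)) = catalan n"
proof (induction n rule: less_induct)
  case (less n)
  show ?case
  proof (cases n)
    case 0
    then show ?thesis
      by (simp add: catalan_hessenberg_def catalan_def)
  next
    case (Suc m)
    then show ?thesis
      using less by (simp add: det_catalan_hessenberg_Suc catalan_Suc_alternating_recurrence)
  qed
qed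

theorem theorem1:
  fixes n :: nat
  assumes "n \<ge> 1"
  shows "real_of_int (det (catalan_hessenberg n)) = real ((2 * n) choose n) / real (n + 1)"
  using det_catalan_hessenberg[of n] by (simp add: catalan_def)

end
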